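(* Let $X\in\mathbb{R}^{n\times p}$ be a fixed design matrix with $X^\top X$ invertible, and $y=X\beta+\varepsilon$ with $\mathbb{E}\varepsilon=0$ and $\mathrm{Cov}(\varepsilon)=\gamma^2I_n$. Let $G$ be a compact group acting linearly on $\mathbb{R}^p$ (each $g$ an invertible $p\times p$ matrix) with Haar probability measure $\mathbb{Q}$, and assume $g^\top\beta=\beta$ for all $g\in G$. Define $\hat\beta_{\mathrm{ERM}}=(X^\top X)^{-1}X^\top y$, $\hat\beta_{\mathrm{aDIST}}=\mathbb{E}_{g\sim\mathbb{Q}}\big[((Xg^\top)^\top Xg^\top)^{-1}(Xg^\top)^\top y\big]$, $\hat\beta_{\mathrm{cERM}}=\arg\min_b\|y-Xb\|_2^2$ subject to $(g^\top-I_p)b=0$ for all $g\in G$, and let $r_{\mathrm{ERM}},r_{\mathrm{aDIST}},r_{\mathrm{cERM}}$ be their risks $\mathbb{E}\|\hat\beta-\beta\|_2^2$. Then: 1. With $v_j$ the orthonormal eigenvectors of $X^\top X$, $d_j^2$ the corresponding eigenvalues, and $\mathcal{G}=\mathbb{E}_{g\sim\mathbb{Q}}[g]$: $r_{\mathrm{ERM}}=\gamma^2\operatorname{tr}[(X^\top X)^{-1}]=\gamma^2\sum_{j=1}^pd_j^{-2}$ and $r_{\mathrm{aDIST}}=\gamma^2\sum_{j=1}^pd_j^{-2}\|\mathcal{G}^\top v_j\|_2^2$. 2. If $G$ acts orthogonally, then $r_{\mathrm{aDIST}}\le r_{\mathrm{ERM}}$. 3. If $G$ is the group of all permutations of the coordinates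 $\{1,\dots,p\}$, then $r_{\mathrm{aDIST}}=\gamma^2p^{-1}1_p^\top(X^\top X)^{-1}1_p$ and $r_{\mathrm{cERM}}=\gamma^2p\,(1_p^\top X^\top X1_p)^{-1}$; if furthermore $X^\top X=I_p$, then $r_{\mathrm{ERM}}=p\gamma^2$ and $r_{\mathrm{aDIST}}=r_{\mathrm{cERM}}=\gamma^2$.
   Context: $Xg^\top$ is the design matrix whose rows are $gx_i$, where $x_i^\top$ are the rows of $X$. $1_p$ is the all-ones vector in $\mathbb{R}^p$. *)

theory Defs
  imports "HOL-Probability.Probability"
begin

text \<open>Design matrix X :: real^'p^'n (n rows, p columns). Matrices act on column vectors via *v.\<close>

definition beta_ERM :: "real^'p^'n \<Rightarrow> real^'n \<Rightarrow> real^'p" where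
  "beta_ERM X y = (matrix_inv (transpose X ** X) ** transpose X) *v y"

definition beta_aDIST :: "real^'p^'n \<Rightarrow> (real^'p^'p) measure \<Rightarrow> real^'n \<Rightarrow> real^'p" where
  "beta_aDIST X Q y =
     (\<integral>g. (matrix_inv (transpose (X ** transpose g) ** (X ** transpose g))
              ** transpose (X ** transpose g)) *v y \<partial>Q)"

definition invariant_subspace :: "(real^'p^'p) set \<Rightarrow> (real^'p) set" where
  "invariant_subspace G = {b. \<forall>g\<in>G. (transpose g - mat 1) *v b = 0}"

definition beta_cERM :: "real^'p^'n \<Rightarrow> (real^'p^'p) set \<Rightarrow> real^'n \<Rightarrow> real^'p" where
  "beta_cERM X G y = arg_min_on (\<lambda>b. (norm (y - X *v b))\<^sup>2) (invariant_subspace G)"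

definition risk :: "'a measure \<Rightarrow> ('a \<Rightarrow> real^'p) \<Rightarrow> real^'p \<Rightarrow> real" where
  "risk M est \<beta> = (\<integral>\<omega>. (norm (est \<omega> - \<beta>))\<^sup>2 \<partial>M)"

definition compact_matrix_group :: "(real^'p^'p) set \<Rightarrow> bool" where
  "compact_matrix_group G \<longleftrightarrow> compact G \<and> mat 1 \<in> G \<and>
     (\<forall>g\<in>G. invertible g \<and> matrix_inv g \<in> G) \<and> (\<forall>g\<in>G. \<forall>h\<in>G. g ** h \<in> G)"

definition haar_probability :: "(real^'p^'p) measure \<Rightarrow> (real^'p^'p) set \<Rightarrow> bool" where
  "haar_probability Q G \<longleftrightarrow> prob_space Q \<and> space Q = G \<and>
     sets Q = sets (restrict_space borel G) \<and>
     (\<forall>g\<in>G. distr Q Q (\<lambda>h. g ** h) = Q)"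

definition perm_matrices :: "(real^'p^'p) set" where
  "perm_matrices = {P. \<exists>\<sigma>. \<sigma> permutes (UNIV::'p set) \<and> P = (\<chi> i j. if i = \<sigma> j then 1 else 0)}"

definition ones :: "real^'p" where "ones = (\<chi> i. 1)"

end

theory Submission
  imports Defs
begin

(* Every estimation error is linear in the noise, beta_hat - beta = B eps. For ERM, B = (X^T X)^-1 X^T and B B^T = (X^T X)^-1.
   Replacing the design X by X g^T turns B into g^-T B; averaging over Q, invariance of the Haar
   measure makes the mean of g^-1 equal to the mean G of g, so aDIST has B = G^T B_ERM (and
   g^T beta = beta removes its bias). Both traces are evaluated in the eigenbasis of X^T X.
   For an orthogonal action G^T is an average of isometries, hence a contraction, which can only
   decrease the risk. For the permutation group G is the constant matrix with entries 1/p, and the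
   invariant subspace is the line through 1_p, on which least squares is explicit. *)

lemma matrix_inv_right: "invertible (A::'a::semiring_1^'n^'n) \<Longrightarrow> A ** matrix_inv A = mat 1"
  unfolding invertible_def matrix_inv_def by (metis (mono_tags, lifting) someI_ex)

lemma matrix_inv_left: "invertible (A::'a::semiring_1^'n^'n) \<Longrightarrow> matrix_inv A ** A = mat 1"
  unfolding invertible_def matrix_inv_def by (metis (mono_tags, lifting) someI_ex)

lemma matrix_inv_unique:
  "invertible (A::'a::semiring_1^'n^'n) \<Longrightarrow> A ** B = mat 1 \<Longrightarrow> matrix_inv A = B"
  by (metis matrix_mul_assoc matrix_mul_lid matrix_mul_rid matrix_inv_left)

lemma invertible_matrix_inv: "invertible (A::'a::semiring_1^'n^'n) \<Longrightarrow> invertible (matrix_inv A)"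
  using matrix_inv_left matrix_inv_right invertible_def by blast

lemma matrix_inv_matrix_inv: "invertible (A::'a::semiring_1^'n^'n) \<Longrightarrow> matrix_inv (matrix_inv A) = A"
  by (simp add: invertible_matrix_inv matrix_inv_left matrix_inv_unique)

lemma matrix_inv_mult:
  fixes A B :: "'a::semiring_1^'n^'n"
  assumes "invertible A" "invertible B"
  shows "matrix_inv (A ** B) = matrix_inv B ** matrix_inv A"
proof (rule matrix_inv_unique)
  show "invertible (A ** B)" using assms by (rule invertible_mult)
  show "A ** B ** (matrix_inv B ** matrix_inv A) = mat 1"
    using assms by (metis matrix_mul_assoc matrix_mul_rid matrix_inv_right)
qed

lemma matrix_inv_transpose:
  fixes A :: "real^'n^'n"
  assumes "invertible A"
  shows "matrix_inv (transpose A) = transpose (matrix_inv A)"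
proof (rule matrix_inv_unique)
  show "invertible (transpose A)" using assms by (rule transpose_invertible)
  show "transpose A ** transpose (matrix_inv A) = mat 1"
    using assms by (metis matrix_transpose_mul matrix_inv_left transpose_mat)
qed

lemma matrix_inv_eigenvector:
  fixes K :: "real^'n^'n"
  assumes "invertible K" and eig: "K *v v = c *s v" and "v \<noteq> 0"
  shows "matrix_inv K *v v = (1 / c) *s v"
proof -
  have v: "v = c *s (matrix_inv K *v v)"
    by (metis assms(1) eig matrix_inv_left matrix_vector_mul_assoc matrix_vector_mul_lid
        vector_scalar_commute)
  then have "c \<noteq> 0" using \<open>v \<noteq> 0\<close> by auto
  then show ?thesis by (subst (2) v) (simp add: vec_eq_iff)
qed

lemma inner_matrix_vector_mult: "(x::real^'n) \<bullet> (A *v y) = (transpose A *v x) \<bullet> y"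
  by (simp add: dot_lmul_matrix)

lemma trace_eq_sum_orthonormal:
  fixes v :: "'n \<Rightarrow> real^'n" and A :: "real^'n^'n"
  assumes "\<And>i j. v i \<bullet> v j = (if i = j then 1 else 0)"
  shows "trace A = (\<Sum>j\<in>UNIV. v j \<bullet> (A *v v j))"
proof -
  define V :: "real^'n^'n" where "V = (\<chi> i j. v j $ i)"
  have "transpose V ** V = mat 1"
    using assms by (simp add: V_def matrix_matrix_mult_def transpose_def mat_def inner_vec_def vec_eq_iff)
  then have VV: "V ** transpose V = mat 1" by (rule matrix_left_right_inverse1)
  have "trace A = trace ((A ** V) ** transpose V)" by (simp add: matrix_mul_assoc[symmetric] VV)
  also have "\<dots> = trace (transpose V ** (A ** V))" by (rule trace_mul_sym)
  also have "\<dots> = (\<Sum>j\<in>UNIV. v j \<bullet> (A *v v j))"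
    by (simp add: trace_def V_def matrix_matrix_mult_def transpose_def inner_vec_def
        matrix_vector_mult_def sum_distrib_left mult_ac)
  finally show ?thesis .
qed

lemma trace_matrix_inv_eigenbasis:
  fixes K :: "real^'n^'n" and v :: "'n \<Rightarrow> real^'n"
  assumes K: "invertible K"
    and onb: "\<And>i j. v i \<bullet> v j = (if i = j then 1 else 0)"
    and eig: "\<And>j. K *v v j = c j *s v j"
  shows "trace (matrix_inv K) = (\<Sum>j\<in>UNIV. 1 / c j)"
proof -
  have "v j \<noteq> 0" for j using onb[of j j] by auto
  then show ?thesis
    by (simp add: trace_eq_sum_orthonormal[OF onb] matrix_inv_eigenvector[OF K eig] onb
        scalar_mult_eq_scaleR)
qed

lemma trace_conj_matrix_inv_eigenbasis:
  fixes K :: "real^'n^'n" and A :: "real^'n^'m" and v :: "'n \<Rightarrow> real^'n"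
  assumes K: "invertible K" and sym: "transpose K = K"
    and onb: "\<And>i j. v i \<bullet> v j = (if i = j then 1 else 0)"
    and eig: "\<And>j. K *v v j = c j *s v j"
  shows "trace (A ** matrix_inv K ** transpose A) = (\<Sum>j\<in>UNIV. (norm (A *v v j))\<^sup>2 / c j)"
proof -
  have "trace (A ** matrix_inv K ** transpose A) = trace (matrix_inv K ** transpose A ** A)"
    by (metis matrix_mul_assoc trace_mul_sym)
  also have "\<dots> = (\<Sum>j\<in>UNIV. v j \<bullet> (matrix_inv K *v (transpose A *v (A *v v j))))"
    by (simp add: trace_eq_sum_orthonormal[OF onb] matrix_vector_mul_assoc matrix_mul_assoc)
  also have "\<dots> = (\<Sum>j\<in>UNIV. (norm (A *v v j))\<^sup>2 / c j)"
  proof (rule sum.cong[OF refl])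
    fix j
    have "v j \<noteq> 0" using onb[of j j] by auto
    then have Kinv_v: "matrix_inv K *v v j = (1 / c j) *s v j"
      using K eig by (rule matrix_inv_eigenvector[rotated 2])
    have "v j \<bullet> (matrix_inv K *v (transpose A *v (A *v v j)))
        = (matrix_inv K *v v j) \<bullet> (transpose A *v (A *v v j))"
      by (metis K inner_matrix_vector_mult matrix_inv_transpose sym)
    also have "\<dots> = (1 / c j) * ((A *v v j) \<bullet> (A *v v j))"
      unfolding Kinv_v scalar_mult_eq_scaleR inner_scaleR_left
      by (metis inner_matrix_vector_mult transpose_transpose)
    finally show "v j \<bullet> (matrix_inv K *v (transpose A *v (A *v v j))) = (norm (A *v v j))\<^sup>2 / c j"
      by (simp add: power2_norm_eq_inner)
  qed
  finally show ?thesis .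
qed

lemma arg_min_on_eqI:
  fixes f :: "'a \<Rightarrow> 'b::linorder"
  assumes "x \<in> S" and "\<And>y. y \<in> S \<Longrightarrow> y \<noteq> x \<Longrightarrow> f x < f y"
  shows "arg_min_on f S = x"
  unfolding arg_min_on_def arg_min_def is_arg_min_def
  using assms by (intro some_equality) (metis less_asym, metis)

lemma norm_sq_diff_scaled_projection:
  fixes y u :: "real^'n"
  assumes "u \<noteq> 0" and s: "s = (u \<bullet> y) / (u \<bullet> u)"
  shows "(norm (y - t *s u))\<^sup>2 = (norm (y - s *s u))\<^sup>2 + (t - s)\<^sup>2 * (u \<bullet> u)"
proof -
  have "s * (u \<bullet> u) = u \<bullet> y" using assms by simp
  then show ?thesis
    unfolding power2_norm_eq_inner scalar_mult_eq_scaleR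
    by (simp add: power2_eq_square inner_commute algebra_simps)
qed

lemma norm_sq_matrix_vector_mult:
  fixes B :: "real^'n^'m"
  shows "(norm (B *v x))\<^sup>2 = (\<Sum>i\<in>UNIV. \<Sum>k\<in>UNIV. \<Sum>l\<in>UNIV. (B$i$k * B$i$l) * (x $ k * x $ l))"
  by (simp add: power2_norm_eq_inner inner_vec_def matrix_vector_mult_def sum_product mult_ac)

locale white_noise =
  fixes M :: "'a measure" and \<epsilon> :: "'a \<Rightarrow> real^'n" and \<gamma> :: real
  assumes integrable_noise_product: "\<And>i j. integrable M (\<lambda>\<omega>. \<epsilon> \<omega> $ i * \<epsilon> \<omega> $ j)"
    and noise_covariance: "\<And>i j. (\<integral>\<omega>. \<epsilon> \<omega> $ i * \<epsilon> \<omega> $ j \<partial>M) = (if i = j then \<gamma>\<^sup>2 else 0)"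
begin

lemma integrable_norm_sq_matrix_mult_noise: "integrable M (\<lambda>\<omega>. (norm (B *v \<epsilon> \<omega>))\<^sup>2)"
  unfolding norm_sq_matrix_vector_mult by (simp add: integrable_noise_product)

lemma integral_norm_sq_matrix_mult_noise:
  "(\<integral>\<omega>. (norm (B *v \<epsilon> \<omega>))\<^sup>2 \<partial>M) = \<gamma>\<^sup>2 * trace (B ** transpose B)"
proof -
  have "(\<integral>\<omega>. (norm (B *v \<epsilon> \<omega>))\<^sup>2 \<partial>M) =
      (\<Sum>i\<in>UNIV. \<Sum>k\<in>UNIV. \<Sum>l\<in>UNIV. (B$i$k * B$i$l) * (\<integral>\<omega>. \<epsilon> \<omega> $ k * \<epsilon> \<omega> $ l \<partial>M))"
    unfolding norm_sq_matrix_vector_mult by (simp add: integrable_noise_product)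
  also have "\<dots> = \<gamma>\<^sup>2 * trace (B ** transpose B)"
    by (simp add: noise_covariance trace_def matrix_matrix_mult_def transpose_def if_distrib
        sum_distrib_left mult_ac cong: if_cong)
  finally show ?thesis .
qed

lemma risk_linear_error:
  assumes "\<And>\<omega>. est \<omega> - \<beta> = B *v \<epsilon> \<omega>"
  shows "risk M est \<beta> = \<gamma>\<^sup>2 * trace (B ** transpose B)"
  unfolding risk_def assms by (rule integral_norm_sq_matrix_mult_noise)

lemma risk_linear_error_contraction_le:
  assumes "\<And>\<omega>. est \<omega> - \<beta> = B *v \<epsilon> \<omega>" and "\<And>\<omega>. est' \<omega> - \<beta> = (A ** B) *v \<epsilon> \<omega>"
    and contraction: "\<And>u. norm (A *v u) \<le> norm u"
  shows "risk M est' \<beta> \<le> risk M est \<beta>"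
  unfolding risk_def assms
proof (rule integral_mono[OF integrable_norm_sq_matrix_mult_noise integrable_norm_sq_matrix_mult_noise])
  show "(norm ((A ** B) *v \<epsilon> \<omega>))\<^sup>2 \<le> (norm (B *v \<epsilon> \<omega>))\<^sup>2" for \<omega>
    unfolding matrix_vector_mul_assoc[symmetric] by (rule power_mono[OF contraction norm_ge_zero])
qed

end

definition ols_matrix :: "real^'p^'n \<Rightarrow> real^'n^'p" where
  "ols_matrix X = matrix_inv (transpose X ** X) ** transpose X"

lemma ols_matrix_mult_design:
  "invertible (transpose X ** X) \<Longrightarrow> ols_matrix X ** X = mat 1"
  by (simp add: ols_matrix_def matrix_inv_left flip: matrix_mul_assoc)

lemma ols_matrix_mult_transpose:
  assumes "invertible (transpose X ** X)"
  shows "ols_matrix X ** transpose (ols_matrix X) = matrix_inv (transpose X ** X)"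
proof -
  let ?S = "matrix_inv (transpose X ** X)"
  have sym: "transpose ?S = ?S"
    by (metis assms matrix_inv_transpose matrix_transpose_mul transpose_transpose)
  have "ols_matrix X ** transpose (ols_matrix X) = ?S ** (transpose X ** X) ** transpose ?S"
    by (simp add: ols_matrix_def matrix_transpose_mul matrix_mul_assoc)
  also have "\<dots> = ?S" by (simp add: matrix_inv_left[OF assms] sym)
  finally show ?thesis .
qed

lemma ols_matrix_transformed_design:
  fixes X :: "real^'p^'n" and g :: "real^'p^'p"
  assumes XtX: "invertible (transpose X ** X)" and g: "invertible g"
  shows "ols_matrix (X ** transpose g) = transpose (matrix_inv g) ** ols_matrix X"
proof -
  let ?K = "transpose X ** X"
  have "transpose (X ** transpose g) ** (X ** transpose g) = (g ** ?K) ** transpose g"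
    by (simp add: matrix_transpose_mul matrix_mul_assoc)
  also have "matrix_inv \<dots> = transpose (matrix_inv g) ** (matrix_inv ?K ** matrix_inv g)"
    using XtX g
    by (simp add: matrix_inv_mult[of "g ** ?K"] matrix_inv_mult[of g] invertible_mult
        transpose_invertible matrix_inv_transpose)
  finally have "ols_matrix (X ** transpose g)
      = transpose (matrix_inv g) ** matrix_inv ?K ** (matrix_inv g ** g) ** transpose X"
    by (simp add: ols_matrix_def matrix_transpose_mul matrix_mul_assoc)
  then show ?thesis
    using g by (simp add: ols_matrix_def matrix_inv_left matrix_mul_assoc)
qed

lemma invertible_gram_mult_vector_nonzero:
  fixes X :: "real^'p^'n"
  assumes "invertible (transpose X ** X)" and "x \<noteq> 0"
  shows "X *v x \<noteq> 0"
proof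
  assume "X *v x = 0"
  then have "(matrix_inv (transpose X ** X) ** (transpose X ** X)) *v x = 0"
    by (simp add: matrix_vector_mul_assoc[symmetric] matrix_mul_assoc del: transpose_matrix_vector)
  then show False using assms by (simp add: matrix_inv_left)
qed

lemma beta_ERM_error:
  "invertible (transpose X ** X) \<Longrightarrow> beta_ERM X (X *v \<beta> + e) - \<beta> = ols_matrix X *v e"
  by (simp add: beta_ERM_def flip: ols_matrix_def)
    (simp add: matrix_vector_right_distrib matrix_vector_mul_assoc ols_matrix_mult_design)

lemma (in white_noise) risk_ERM:
  assumes "invertible (transpose X ** X)"
  shows "risk M (\<lambda>\<omega>. beta_ERM X (X *v \<beta> + \<epsilon> \<omega>)) \<beta> = \<gamma>\<^sup>2 * trace (matrix_inv (transpose X ** X))"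
  using assms by (simp add: risk_linear_error beta_ERM_error ols_matrix_mult_transpose)

lemma norm_orthogonal_matrix_mult: "orthogonal_matrix (A::real^'n^'n) \<Longrightarrow> norm (A *v x) = norm x"
  by (metis orthogonal_transformation orthogonal_transformation_matrix matrix_of_matrix_vector_mul
      matrix_vector_mul_linear)

lemma bounded_linear_matrix_mult_left: "bounded_linear (\<lambda>B::real^'k^'n. (A::real^'n^'m) ** B)"
  unfolding linear_conv_bounded_linear[symmetric]
  by (rule linearI) (simp_all add: matrix_matrix_mult_def vec_eq_iff sum.distrib sum_distrib_left algebra_simps)

lemma bounded_linear_matrix_mult_right: "bounded_linear (\<lambda>A::real^'n^'m. A ** (B::real^'k^'n))"
  unfolding linear_conv_bounded_linear[symmetric]
  by (rule linearI) (simp_all add: matrix_matrix_mult_def vec_eq_iff sum.distrib sum_distrib_left algebra_simps)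

lemma bounded_linear_transpose_mult_vector: "bounded_linear (\<lambda>A::real^'n^'m. transpose A *v x)"
  unfolding linear_conv_bounded_linear[symmetric]
  by (rule linearI) (simp_all add: transpose_def matrix_vector_mult_def vec_eq_iff sum.distrib
      sum_distrib_left algebra_simps)

lemma bounded_linear_matrix_entry: "bounded_linear (\<lambda>A::real^'n^'m. A $ i $ j)"
  unfolding linear_conv_bounded_linear[symmetric] by (rule linearI) simp_all

lemma continuous_on_matrix_inv_compact_group:
  fixes G :: "(real^'n^'n) set"
  assumes "compact_matrix_group G"
  shows "continuous_on G matrix_inv"
proof -
  have "compact G" and inv: "\<And>g. g \<in> G \<Longrightarrow> invertible g \<and> matrix_inv g \<in> G"
    using assms by (auto simp: compact_matrix_group_def)
  have graph: "(\<lambda>g. (g, matrix_inv g)) ` G = (G \<times> G) \<inter> {z. fst z ** snd z = mat 1}"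
    using inv by (force simp: matrix_inv_right dest: matrix_inv_unique)
  have "closed {z::(real^'n^'n) \<times> (real^'n^'n). fst z ** snd z = mat 1}"
    unfolding matrix_matrix_mult_def by (intro closed_Collect_eq continuous_intros)
  then have "closedin (top_of_set (G \<times> G)) ((\<lambda>g. (g, matrix_inv g)) ` G)"
    unfolding graph by (simp add: closedin_closed_Int)
  then show ?thesis
    using continuous_closed_graph_eq[OF \<open>compact G\<close>, of matrix_inv G] inv by (simp add: Pi_iff)
qed

locale haar_matrix_group =
  fixes G :: "(real^'p^'p) set" and Q :: "(real^'p^'p) measure"
  assumes group: "compact_matrix_group G" and haar: "haar_probability Q G"
begin

sublocale prob_space Q
  using haar by (simp add: haar_probability_def)

lemma space_haar: "space Q = G"
  using haar by (simp add: haar_probability_def)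

lemma invertible_group: "g \<in> G \<Longrightarrow> invertible g"
  and matrix_inv_group: "g \<in> G \<Longrightarrow> matrix_inv g \<in> G"
  and mult_group: "g \<in> G \<Longrightarrow> h \<in> G \<Longrightarrow> g ** h \<in> G"
  using group by (auto simp: compact_matrix_group_def)

lemma borel_measurable_continuous_on_group:
  "continuous_on G f \<Longrightarrow> f \<in> borel_measurable Q"
  using haar unfolding haar_probability_def
  by (metis borel_measurable_continuous_on_restrict measurable_cong_sets)

lemma integrable_continuous_on_group:
  fixes f :: "real^'p^'p \<Rightarrow> 'b::{banach, second_countable_topology}"
  assumes "continuous_on G f"
  shows "integrable Q f"
proof -
  have "compact (f ` G)"
    using group assms by (auto simp: compact_matrix_group_def intro: compact_continuous_image)
  then obtain B where "\<And>g. g \<in> G \<Longrightarrow> norm (f g) \<le> B"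
    by (metis bounded_iff compact_imp_bounded imageI)
  then show ?thesis
    by (intro integrable_const_bound[where B=B])
      (auto simp: space_haar borel_measurable_continuous_on_group assms)
qed

lemma integrable_id: "integrable Q (\<lambda>g. g)"
  by (intro integrable_continuous_on_group continuous_intros)

lemma integrable_matrix_inv: "integrable Q matrix_inv"
  by (intro integrable_continuous_on_group continuous_on_matrix_inv_compact_group group)

lemma integral_left_translate:
  fixes f :: "real^'p^'p \<Rightarrow> 'b::{banach, second_countable_topology}"
  assumes g: "g \<in> G" and f: "f \<in> borel_measurable Q"
  shows "(\<integral>h. f (g ** h) \<partial>Q) = (\<integral>h. f h \<partial>Q)"
proof -
  have "(\<lambda>h. g ** h) \<in> restrict_space borel G \<rightarrow>\<^sub>M restrict_space borel G"
    using g mult_group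
    by (intro measurable_restrict_space3 borel_measurable_continuous_onI
        linear_continuous_on bounded_linear_matrix_mult_left) auto
  then have "(\<lambda>h. g ** h) \<in> Q \<rightarrow>\<^sub>M Q"
    using haar measurable_cong_sets unfolding haar_probability_def by metis
  then have "(\<integral>h. f (g ** h) \<partial>Q) = (\<integral>h. f h \<partial>distr Q Q (\<lambda>h. g ** h))"
    using f by (simp add: integral_distr)
  also have "distr Q Q (\<lambda>h. g ** h) = Q"
    using haar g by (simp add: haar_probability_def)
  finally show ?thesis .
qed

lemma haar_mean_left_absorb:
  assumes "g \<in> G"
  shows "g ** (\<integral>h. h \<partial>Q) = (\<integral>h. h \<partial>Q)"
proof -
  have "g ** (\<integral>h. h \<partial>Q) = (\<integral>h. g ** h \<partial>Q)"
    by (rule integral_bounded_linear[OF bounded_linear_matrix_mult_left integrable_id, symmetric])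
  also have "\<dots> = (\<integral>h. h \<partial>Q)"
    using assms by (intro integral_left_translate) (auto intro: borel_measurable_continuous_on_group)
  finally show ?thesis .
qed

lemma integral_matrix_inv_right_absorb:
  assumes g: "g \<in> G"
  shows "(\<integral>h. matrix_inv h \<partial>Q) ** g = (\<integral>h. matrix_inv h \<partial>Q)"
proof -
  have "(\<integral>h. matrix_inv h \<partial>Q) ** g = (\<integral>h. matrix_inv h ** g \<partial>Q)"
    by (rule integral_bounded_linear[OF bounded_linear_matrix_mult_right integrable_matrix_inv, symmetric])
  also have "\<dots> = (\<integral>h. matrix_inv (matrix_inv g ** h) \<partial>Q)"
    using g by (intro Bochner_Integration.integral_cong)
      (auto simp: space_haar matrix_inv_mult invertible_group matrix_inv_group matrix_inv_matrix_inv)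
  also have "\<dots> = (\<integral>h. matrix_inv h \<partial>Q)"
    using g by (intro integral_left_translate matrix_inv_group borel_measurable_continuous_on_group
        continuous_on_matrix_inv_compact_group group)
  finally show ?thesis .
qed

lemma integral_matrix_inv_eq_haar_mean: "(\<integral>h. matrix_inv h \<partial>Q) = (\<integral>h. h \<partial>Q)"
proof -
  let ?H = "\<integral>h. matrix_inv h \<partial>Q" and ?M = "\<integral>h. h \<partial>Q"
  have "?H ** ?M = (\<integral>h. ?H ** h \<partial>Q)"
    by (rule integral_bounded_linear[OF bounded_linear_matrix_mult_left integrable_id, symmetric])
  also have "\<dots> = (\<integral>h. ?H \<partial>Q)"
    by (intro Bochner_Integration.integral_cong) (auto simp: space_haar integral_matrix_inv_right_absorb)
  finally have "?H ** ?M = ?H" by (simp add: prob_space)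
  moreover have "?H ** ?M = (\<integral>h. matrix_inv h ** ?M \<partial>Q)"
    by (rule integral_bounded_linear[OF bounded_linear_matrix_mult_right integrable_matrix_inv, symmetric])
  moreover have "\<dots> = (\<integral>h. ?M \<partial>Q)"
    by (intro Bochner_Integration.integral_cong) (auto simp: space_haar haar_mean_left_absorb matrix_inv_group)
  ultimately show ?thesis by (simp add: prob_space)
qed

lemma integral_transpose_mult_vector: "(\<integral>g. transpose g *v x \<partial>Q) = transpose (\<integral>g. g \<partial>Q) *v x"
  by (rule integral_bounded_linear[OF bounded_linear_transpose_mult_vector integrable_id])

lemma transpose_haar_mean_fixed:
  assumes "\<And>g. g \<in> G \<Longrightarrow> transpose g *v \<beta> = \<beta>"
  shows "transpose (\<integral>g. g \<partial>Q) *v \<beta> = \<beta>"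
proof -
  have "transpose (\<integral>g. g \<partial>Q) *v \<beta> = (\<integral>g. \<beta> \<partial>Q)"
    unfolding integral_transpose_mult_vector[symmetric]
    using assms by (intro Bochner_Integration.integral_cong) (auto simp: space_haar)
  then show ?thesis by (simp add: prob_space)
qed

lemma norm_transpose_haar_mean_le:
  assumes "\<forall>g\<in>G. orthogonal_matrix g"
  shows "norm (transpose (\<integral>g. g \<partial>Q) *v x) \<le> norm x"
proof -
  have "norm (transpose (\<integral>g. g \<partial>Q) *v x) \<le> (\<integral>g. norm (transpose g *v x) \<partial>Q)"
    unfolding integral_transpose_mult_vector[symmetric] by (rule integral_norm_bound)
  also have "\<dots> = (\<integral>g. norm x \<partial>Q)"
    using assms by (intro Bochner_Integration.integral_cong)
      (auto simp: space_haar norm_orthogonal_matrix_mult simp del: transpose_matrix_vector)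
  finally show ?thesis by (simp add: prob_space)
qed

lemma beta_aDIST_eq:
  assumes "invertible (transpose X ** X)"
  shows "beta_aDIST X Q y = transpose (\<integral>g. g \<partial>Q) *v (ols_matrix X *v y)"
proof -
  have "beta_aDIST X Q y = (\<integral>g. transpose (matrix_inv g) *v (ols_matrix X *v y) \<partial>Q)"
    unfolding beta_aDIST_def ols_matrix_def[symmetric] using assms
    by (intro Bochner_Integration.integral_cong)
      (auto simp: space_haar invertible_group ols_matrix_transformed_design matrix_vector_mul_assoc)
  also have "\<dots> = transpose (\<integral>g. matrix_inv g \<partial>Q) *v (ols_matrix X *v y)"
    by (rule integral_bounded_linear[OF bounded_linear_transpose_mult_vector integrable_matrix_inv])
  finally show ?thesis by (simp add: integral_matrix_inv_eq_haar_mean)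
qed

lemma beta_aDIST_error:
  assumes "invertible (transpose X ** X)" and "\<And>g. g \<in> G \<Longrightarrow> transpose g *v \<beta> = \<beta>"
  shows "beta_aDIST X Q (X *v \<beta> + e) - \<beta> = (transpose (\<integral>g. g \<partial>Q) ** ols_matrix X) *v e"
proof -
  have "beta_aDIST X Q (X *v \<beta> + e)
      = transpose (\<integral>g. g \<partial>Q) *v (\<beta> + ols_matrix X *v e)"
    using assms(1) by (simp add: beta_aDIST_eq matrix_vector_right_distrib matrix_vector_mul_assoc
        ols_matrix_mult_design del: transpose_matrix_vector)
  also have "\<dots> = \<beta> + (transpose (\<integral>g. g \<partial>Q) ** ols_matrix X) *v e"
    using transpose_haar_mean_fixed[OF assms(2)]
    by (simp add: matrix_vector_right_distrib matrix_vector_mul_assoc del: transpose_matrix_vector)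
  finally show ?thesis by simp
qed

end

context white_noise
begin

lemma risk_aDIST:
  assumes "haar_matrix_group G Q" and "invertible (transpose X ** X)"
    and "\<And>g. g \<in> G \<Longrightarrow> transpose g *v \<beta> = \<beta>"
  shows "risk M (\<lambda>\<omega>. beta_aDIST X Q (X *v \<beta> + \<epsilon> \<omega>)) \<beta>
      = \<gamma>\<^sup>2 * trace (transpose (\<integral>g. g \<partial>Q) ** matrix_inv (transpose X ** X) ** (\<integral>g. g \<partial>Q))"
proof -
  interpret haar_matrix_group G Q by (rule assms(1))
  let ?A = "transpose (\<integral>g. g \<partial>Q)" and ?W = "ols_matrix X"
  have "risk M (\<lambda>\<omega>. beta_aDIST X Q (X *v \<beta> + \<epsilon> \<omega>)) \<beta>
      = \<gamma>\<^sup>2 * trace ((?A ** ?W) ** transpose (?A ** ?W))"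
    using beta_aDIST_error[OF assms(2,3)] by (rule risk_linear_error)
  also have "(?A ** ?W) ** transpose (?A ** ?W) = ?A ** (?W ** transpose ?W) ** transpose ?A"
    by (simp add: matrix_transpose_mul matrix_mul_assoc)
  finally show ?thesis
    using assms(2) by (simp add: ols_matrix_mult_transpose)
qed

lemma risk_aDIST_le_risk_ERM:
  assumes "haar_matrix_group G Q" and "\<forall>g\<in>G. orthogonal_matrix g"
    and "invertible (transpose X ** X)" and "\<And>g. g \<in> G \<Longrightarrow> transpose g *v \<beta> = \<beta>"
  shows "risk M (\<lambda>\<omega>. beta_aDIST X Q (X *v \<beta> + \<epsilon> \<omega>)) \<beta>
      \<le> risk M (\<lambda>\<omega>. beta_ERM X (X *v \<beta> + \<epsilon> \<omega>)) \<beta>"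
proof -
  interpret haar_matrix_group G Q by (rule assms(1))
  show ?thesis
    using beta_ERM_error[OF assms(3)] beta_aDIST_error[OF assms(3,4)]
      norm_transpose_haar_mean_le[OF assms(2)]
    by (rule risk_linear_error_contraction_le)
qed

end

definition perm_matrix :: "('p \<Rightarrow> 'p) \<Rightarrow> real^'p^'p" where
  "perm_matrix \<sigma> = (\<chi> i j. if i = \<sigma> j then 1 else 0)"

lemma perm_matrices_eq: "perm_matrices = {perm_matrix \<sigma> | \<sigma>. \<sigma> permutes UNIV}"
  unfolding perm_matrices_def perm_matrix_def by blast

lemma perm_matrix_mult_row:
  assumes "\<sigma> permutes UNIV"
  shows "(perm_matrix \<sigma> ** A) $ i = A $ inv \<sigma> i"
proof -
  have "i = \<sigma> k \<longleftrightarrow> k = inv \<sigma> i" for k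
    using assms by (metis permutes_inverses)
  then show ?thesis
    by (simp add: perm_matrix_def matrix_matrix_mult_def vec_eq_iff flip: of_bool_def)
qed

lemma transpose_perm_matrix_mult_vector:
  "(transpose (perm_matrix \<sigma>) *v b) $ i = b $ \<sigma> i"
  by (simp add: perm_matrix_def transpose_def matrix_vector_mult_def flip: of_bool_def)

lemma perm_matrix_column_sum: "(\<Sum>i\<in>UNIV. perm_matrix \<sigma> $ i $ j) = 1"
  by (simp add: perm_matrix_def)

lemma invariant_subspace_perm_matrices:
  "invariant_subspace (perm_matrices :: (real^'p^'p) set) = range (\<lambda>t. t *s ones)"
proof -
  have "b \<in> invariant_subspace perm_matrices
      \<longleftrightarrow> (\<forall>\<sigma>. \<sigma> permutes UNIV \<longrightarrow> transpose (perm_matrix \<sigma>) *v b = b)" for b :: "real^'p"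
    by (auto simp: invariant_subspace_def perm_matrices_eq matrix_vector_mult_diff_rdistrib
        simp del: transpose_matrix_vector)
  also have "\<dots> b \<longleftrightarrow> (\<forall>\<sigma>. \<sigma> permutes UNIV \<longrightarrow> (\<forall>i. b $ \<sigma> i = b $ i))" for b :: "real^'p"
    by (simp add: vec_eq_iff transpose_perm_matrix_mult_vector del: transpose_matrix_vector)
  also have "\<dots> b \<longleftrightarrow> (\<forall>i j. b $ i = b $ j)" for b :: "real^'p"
  proof (intro iffI allI)
    fix i j :: 'p assume invariant: "\<forall>\<sigma>. \<sigma> permutes UNIV \<longrightarrow> (\<forall>i. b $ \<sigma> i = b $ i)"
    have "Transposition.transpose i j permutes UNIV" by (rule permutes_swap_id) simp_all
    then have "b $ Transposition.transpose i j i = b $ i" using invariant by blast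
    then show "b $ i = b $ j" by simp
  qed simp
  also have "\<dots> b \<longleftrightarrow> b \<in> range (\<lambda>t. t *s ones)" for b :: "real^'p"
  proof
    assume "\<forall>i j. b $ i = b $ j"
    then have "b = (b $ undefined) *s ones" by (simp add: vec_eq_iff ones_def)
    then show "b \<in> range (\<lambda>t. t *s ones)" by blast
  qed (auto simp: ones_def)
  finally show ?thesis by blast
qed

lemma trace_constant_matrix_conj:
  fixes S :: "real^'p^'p"
  shows "trace ((\<chi> i j. c) ** S ** (\<chi> i j. c) :: real^'m^'m)
    = real CARD('m) * c\<^sup>2 * (ones \<bullet> (S *v ones))"
  by (simp add: trace_def matrix_matrix_mult_def transpose_def ones_def inner_vec_def
      matrix_vector_mult_def sum_distrib_left sum_distrib_right power2_eq_square mult_ac)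
    (rule sum.swap)

lemma trace_mult_transpose_constant_rows:
  "trace ((\<chi> i. w) ** transpose (\<chi> i. w) :: real^'m^'m) = real CARD('m) * (w \<bullet> w)"
  by (simp add: trace_def matrix_matrix_mult_def transpose_def inner_vec_def)

lemma (in haar_matrix_group) haar_mean_perm_matrices:
  assumes G: "G = perm_matrices"
  shows "(\<integral>g. g \<partial>Q) = (\<chi> i j. 1 / real CARD('p))"
proof -
  let ?M = "\<integral>g. g \<partial>Q"
  have column_const: "?M $ i $ j = ?M $ k $ j" for i k j
  proof -
    let ?\<tau> = "Transposition.transpose i k"
    have "?\<tau> permutes UNIV" by (rule permutes_swap_id) auto
    then have "perm_matrix ?\<tau> ** ?M = ?M"
      using G by (intro haar_mean_left_absorb) (auto simp: perm_matrices_eq)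
    then have "(perm_matrix ?\<tau> ** ?M) $ i = ?M $ i" by simp
    then show ?thesis
      using \<open>?\<tau> permutes UNIV\<close> by (simp add: perm_matrix_mult_row inv_swap_id)
  qed
  have column_sum: "(\<Sum>i\<in>UNIV. ?M $ i $ j) = 1" for j
  proof -
    have "(\<Sum>i\<in>UNIV. ?M $ i $ j) = (\<integral>g. (\<Sum>i\<in>UNIV. g $ i $ j) \<partial>Q)"
      using integral_bounded_linear[OF bounded_linear_matrix_entry integrable_id]
        integrable_bounded_linear[OF bounded_linear_matrix_entry integrable_id]
      by simp
    also have "\<dots> = (\<integral>g. 1 \<partial>Q)"
      using G by (intro Bochner_Integration.integral_cong)
        (auto simp: space_haar perm_matrices_eq perm_matrix_column_sum)
    finally show ?thesis by (simp add: prob_space)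
  qed
  have "?M $ i $ j = 1 / real CARD('p)" for i j
  proof -
    have "(\<Sum>k\<in>UNIV. ?M $ k $ j) = (\<Sum>k\<in>(UNIV::'p set). ?M $ i $ j)"
      by (rule sum.cong[OF refl column_const])
    then show ?thesis using column_sum[of j] by (simp add: field_simps)
  qed
  then show ?thesis by (simp add: vec_eq_iff)
qed

lemma (in white_noise) risk_aDIST_perm_matrices:
  fixes X :: "real^'p^'n"
  assumes "haar_matrix_group perm_matrices Q" and "invertible (transpose X ** X)"
    and "\<And>g. g \<in> perm_matrices \<Longrightarrow> transpose g *v \<beta> = \<beta>"
  shows "risk M (\<lambda>\<omega>. beta_aDIST X Q (X *v \<beta> + \<epsilon> \<omega>)) \<beta>
      = \<gamma>\<^sup>2 / real CARD('p) * (ones \<bullet> (matrix_inv (transpose X ** X) *v ones))"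
  using risk_aDIST[OF assms] haar_matrix_group.haar_mean_perm_matrices[OF assms(1) refl]
  by (simp add: transpose_def trace_constant_matrix_conj power2_eq_square)

lemma beta_cERM_perm_matrices:
  fixes X :: "real^'p^'n"
  assumes u: "X *v ones \<noteq> 0"
  shows "beta_cERM X perm_matrices y
    = (((X *v ones) \<bullet> y) / ((X *v ones) \<bullet> (X *v ones))) *s ones"
proof -
  let ?u = "X *v ones"
  let ?s = "(?u \<bullet> y) / (?u \<bullet> ?u)"
  have residual: "(norm (y - X *v (t *s ones)))\<^sup>2
      = (norm (y - X *v (?s *s ones)))\<^sup>2 + (t - ?s)\<^sup>2 * (?u \<bullet> ?u)" for t
    using norm_sq_diff_scaled_projection[OF u refl, of y t] by (simp only: vector_scalar_commute)
  show ?thesis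
    unfolding beta_cERM_def invariant_subspace_perm_matrices
  proof (rule arg_min_on_eqI)
    fix b :: "real^'p" assume "b \<in> range (\<lambda>t. t *s ones)" and "b \<noteq> ?s *s ones"
    then obtain t where "b = t *s ones" and "t \<noteq> ?s" by auto
    then show "(norm (y - X *v (?s *s ones)))\<^sup>2 < (norm (y - X *v b))\<^sup>2"
      using residual[of t] u by simp
  qed auto
qed

lemma beta_cERM_perm_matrices_error:
  fixes X :: "real^'p^'n"
  assumes u: "X *v ones \<noteq> 0" and \<beta>: "\<beta> = t *s ones"
  defines "w \<equiv> (1 / ((X *v ones) \<bullet> (X *v ones))) *s (X *v ones)"
  shows "beta_cERM X perm_matrices (X *v \<beta> + e) - \<beta> = (\<chi> i. w) *v e"
proof -
  define u where "u = X *v ones"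
  have "u \<bullet> (X *v \<beta> + e) = t * (u \<bullet> u) + u \<bullet> e"
    unfolding \<beta> vector_scalar_commute u_def[symmetric] unfolding scalar_mult_eq_scaleR
    by (simp add: inner_add_right)
  then have estimate: "beta_cERM X perm_matrices (X *v \<beta> + e) = (t + (u \<bullet> e) / (u \<bullet> u)) *s ones"
    using u by (simp add: beta_cERM_perm_matrices add_divide_distrib flip: u_def)
  have row_mult: "(\<chi> i. w) *v e = ((u \<bullet> e) / (u \<bullet> u)) *s ones"
    unfolding w_def u_def[symmetric]
    by (simp add: vec_eq_iff matrix_vector_mult_def inner_vec_def ones_def sum_divide_distrib)
  show ?thesis
    unfolding estimate row_mult by (simp add: \<beta> vec_eq_iff)
qed

lemma (in white_noise) risk_cERM_perm_matrices:
  fixes X :: "real^'p^'n"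
  assumes K: "invertible (transpose X ** X)"
    and \<beta>_fixed: "\<And>g. g \<in> perm_matrices \<Longrightarrow> transpose g *v \<beta> = \<beta>"
  shows "risk M (\<lambda>\<omega>. beta_cERM X perm_matrices (X *v \<beta> + \<epsilon> \<omega>)) \<beta>
      = \<gamma>\<^sup>2 * real CARD('p) / (ones \<bullet> ((transpose X ** X) *v ones))"
proof -
  have "\<beta> \<in> invariant_subspace perm_matrices"
    using \<beta>_fixed by (simp add: invariant_subspace_def matrix_vector_mult_diff_rdistrib
        del: transpose_matrix_vector)
  then obtain t where \<beta>: "\<beta> = t *s ones"
    by (auto simp: invariant_subspace_perm_matrices)
  have "ones \<noteq> (0 :: real^'p)" by (simp add: ones_def vec_eq_iff)
  then have u: "X *v ones \<noteq> 0" by (rule invertible_gram_mult_vector_nonzero[OF K])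
  define w where "w = (1 / ((X *v ones) \<bullet> (X *v ones))) *s (X *v ones)"
  let ?B = "(\<chi> i. w) :: real^'n^'p"
  have "beta_cERM X perm_matrices (X *v \<beta> + e) - \<beta> = ?B *v e" for e
    unfolding w_def by (rule beta_cERM_perm_matrices_error[OF u \<beta>])
  then have "risk M (\<lambda>\<omega>. beta_cERM X perm_matrices (X *v \<beta> + \<epsilon> \<omega>)) \<beta>
      = \<gamma>\<^sup>2 * trace (?B ** transpose ?B)"
    by (rule risk_linear_error)
  also have "trace (?B ** transpose ?B) = real CARD('p) * (w \<bullet> w)"
    by (rule trace_mult_transpose_constant_rows)
  also have "w \<bullet> w = 1 / ((X *v ones) \<bullet> (X *v ones))"
    using u by (simp add: w_def scalar_mult_eq_scaleR power2_eq_square)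
  also have "(X *v ones) \<bullet> (X *v ones) = ones \<bullet> ((transpose X ** X) *v ones)"
    by (simp add: inner_matrix_vector_mult matrix_vector_mul_assoc[symmetric] del: transpose_matrix_vector)
  finally show ?thesis by simp
qed

theorem proposition5p4:
  fixes X :: "real^'p^'n" and \<beta> :: "real^'p" and \<gamma> :: real
    and M :: "'a measure" and \<epsilon> :: "'a \<Rightarrow> real^'n"
    and G :: "(real^'p^'p) set" and Q :: "(real^'p^'p) measure"
  assumes XtX_inv: "invertible (transpose X ** X)"
    and M: "prob_space M"
    and eps_meas: "\<epsilon> \<in> borel_measurable M"
    and eps_int: "\<And>i. integrable M (\<lambda>\<omega>. \<epsilon> \<omega> $ i)"
    and eps_mean: "\<And>i. (\<integral>\<omega>. \<epsilon> \<omega> $ i \<partial>M) = 0"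
    and eps_int2: "\<And>i j. integrable M (\<lambda>\<omega>. \<epsilon> \<omega> $ i * \<epsilon> \<omega> $ j)"
    and eps_cov: "\<And>i j. (\<integral>\<omega>. \<epsilon> \<omega> $ i * \<epsilon> \<omega> $ j \<partial>M) = (if i = j then \<gamma>\<^sup>2 else 0)"
    and G: "compact_matrix_group G"
    and Q: "haar_probability Q G"
    and beta_inv: "\<And>g. g \<in> G \<Longrightarrow> transpose g *v \<beta> = \<beta>"
  defines "r_ERM \<equiv> risk M (\<lambda>\<omega>. beta_ERM X (X *v \<beta> + \<epsilon> \<omega>)) \<beta>"
    and "r_aDIST \<equiv> risk M (\<lambda>\<omega>. beta_aDIST X Q (X *v \<beta> + \<epsilon> \<omega>)) \<beta>"
    and "r_cERM \<equiv> risk M (\<lambda>\<omega>. beta_cERM X G (X *v \<beta> + \<epsilon> \<omega>)) \<beta>"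
    and "\<G> \<equiv> (\<integral>g. g \<partial>Q)"
  shows
    "(\<forall>(v :: 'p \<Rightarrow> real^'p) (d :: 'p \<Rightarrow> real).
        (\<forall>i j. v i \<bullet> v j = (if i = j then 1 else 0)) \<and>
        (\<forall>j. (transpose X ** X) *v v j = (d j)\<^sup>2 *s v j) \<longrightarrow>
        r_ERM = \<gamma>\<^sup>2 * trace (matrix_inv (transpose X ** X)) \<and>
        \<gamma>\<^sup>2 * trace (matrix_inv (transpose X ** X)) = \<gamma>\<^sup>2 * (\<Sum>j\<in>UNIV. 1 / (d j)\<^sup>2) \<and>
        r_aDIST = \<gamma>\<^sup>2 * (\<Sum>j\<in>UNIV. (norm (transpose \<G> *v v j))\<^sup>2 / (d j)\<^sup>2))
     \<and> ((\<forall>g\<in>G. orthogonal_matrix g) \<longrightarrow> r_aDIST \<le> r_ERM)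
     \<and> (G = perm_matrices \<longrightarrow>
          r_aDIST = \<gamma>\<^sup>2 / real CARD('p) * (ones \<bullet> (matrix_inv (transpose X ** X) *v ones)) \<and>
          r_cERM = \<gamma>\<^sup>2 * real CARD('p) / (ones \<bullet> ((transpose X ** X) *v ones)) \<and>
          (transpose X ** X = mat 1 \<longrightarrow>
             r_ERM = real CARD('p) * \<gamma>\<^sup>2 \<and> r_aDIST = \<gamma>\<^sup>2 \<and> r_cERM = \<gamma>\<^sup>2))"
proof -
  interpret white_noise M \<epsilon> \<gamma> using eps_int2 eps_cov by unfold_locales
  have haar: "haar_matrix_group G Q" using G Q by unfold_locales
  let ?K = "transpose X ** X"
  have sym: "transpose ?K = ?K" by (simp add: matrix_transpose_mul)
  have ERM: "r_ERM = \<gamma>\<^sup>2 * trace (matrix_inv ?K)"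
    unfolding r_ERM_def by (rule risk_ERM[OF XtX_inv])
  have aDIST: "r_aDIST = \<gamma>\<^sup>2 * trace (transpose \<G> ** matrix_inv ?K ** \<G>)"
    unfolding r_aDIST_def \<G>_def by (rule risk_aDIST[OF haar XtX_inv beta_inv])
  have spectral: "trace (matrix_inv ?K) = (\<Sum>j\<in>UNIV. 1 / (d j)\<^sup>2)
      \<and> r_aDIST = \<gamma>\<^sup>2 * (\<Sum>j\<in>UNIV. (norm (transpose \<G> *v v j))\<^sup>2 / (d j)\<^sup>2)"
    if "\<forall>i j. v i \<bullet> v j = (if i = j then 1 else 0)" and "\<forall>j. ?K *v v j = (d j)\<^sup>2 *s v j"
    for v :: "'p \<Rightarrow> real^'p" and d :: "'p \<Rightarrow> real"
    using trace_matrix_inv_eigenbasis[OF XtX_inv that[rule_format]]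
      trace_conj_matrix_inv_eigenbasis[OF XtX_inv sym that[rule_format], where A = "transpose \<G>"]
      aDIST
    by simp
  have orthogonal: "r_aDIST \<le> r_ERM" if "\<forall>g\<in>G. orthogonal_matrix g"
    unfolding r_aDIST_def r_ERM_def by (rule risk_aDIST_le_risk_ERM[OF haar that XtX_inv beta_inv])
  have permutation: "r_aDIST = \<gamma>\<^sup>2 / real CARD('p) * (ones \<bullet> (matrix_inv ?K *v ones))
      \<and> r_cERM = \<gamma>\<^sup>2 * real CARD('p) / (ones \<bullet> (?K *v ones))" if "G = perm_matrices"
    using that haar beta_inv unfolding r_aDIST_def r_cERM_def
    by (simp add: risk_aDIST_perm_matrices[OF _ XtX_inv] risk_cERM_perm_matrices[OF XtX_inv])
  have "matrix_inv (mat 1 :: real^'p^'p) = mat 1" by (simp add: matrix_inv_unique invertible_def)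
  moreover have "ones \<bullet> (ones :: real^'p) = real CARD('p)" by (simp add: ones_def inner_vec_def)
  ultimately show ?thesis
    using ERM spectral orthogonal permutation by (auto simp: trace_I)
qed

end
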